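(* Let $f\colon U\otimes V\rightarrow W$ be a multiplication and let $\alpha=(a\ b\ c)$ be a dimension vector for $f$. Then the representation variety $R(f,\alpha)$ has exactly one left general irreducible component.
   Context: Fix a ground field $k$. A multiplication is a linear map $f\colon U\otimes V\rightarrow W$ of finite dimensional $k$-vector spaces. A representation $R$ of $f$ consists of finite dimensional vector spaces $R(0),R(1),R(2)$ and linear maps $R(\phi_{01})\colon R(0)\otimes U\rightarrow R(1)$, $R(\phi_{12})\colon R(1)\otimes V\rightarrow R(2)$, $R(\phi_{02})\colon R(0)\otimes W\rightarrow R(2)$ with $R(\phi_{12})\circ(R(\phi_{01})\otimes I_V)=R(\phi_{02})\circ(I_{R(0)}\otimes f)$ as maps $R(0)\otimes U\otimes V\rightarrow R(2)$. Its dimension vector is $(\dim R(0)\ \dim R(1)\ \dim R(2))$. For $\alpha=(a\ b\ c)$, $R(f,\alpha)$ is the closed subvariety of $\mathrm{Hom}(k^a\otimes U,k^b)\times\mathrm{Hom}(k^b\otimes V,k^c)\times\mathrm{Hom}(k^a\otimes W,k^c)$ of triples satisfying this relation. A representation of the vector space $U$ of dimension vector $(a\ b)$ is a linear map $k^a\otimes U\rightarrow k^b$; these form the vector space $R(U,(a\ b))=\mathrm{Hom}(k^a\otimes U,k^b)$. There is a restriction morphism $R(f,\alpha)\rightarrow R(U,(a\ b))$, $(\phi_{01},\phi_{12},\phi_{02})\mapsto\phi_{01}$. An irreducible component $C$ of $R(f,\alpha)$ is called left general if the restriction of this morphism to $C$ is dominant. *)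

theory Defs
  imports Main
begin

inductive_set polyfuns :: "(('i \<Rightarrow> 'k::comm_ring_1) \<Rightarrow> 'k) set" where
  const: "(\<lambda>x. c) \<in> polyfuns"
| var: "(\<lambda>x. x i) \<in> polyfuns"
| add: "p \<in> polyfuns \<Longrightarrow> q \<in> polyfuns \<Longrightarrow> (\<lambda>x. p x + q x) \<in> polyfuns"
| mult: "p \<in> polyfuns \<Longrightarrow> q \<in> polyfuns \<Longrightarrow> (\<lambda>x. p x * q x) \<in> polyfuns"

definition affine_space :: "'i set \<Rightarrow> ('i \<Rightarrow> 'k::comm_ring_1) set" where
  "affine_space I = {x. \<forall>i. i \<notin> I \<longrightarrow> x i = 0}"

definition zariski_closed :: "'i set \<Rightarrow> ('i \<Rightarrow> 'k::comm_ring_1) set \<Rightarrow> bool" where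
  "zariski_closed I Z \<longleftrightarrow>
     (\<exists>P \<subseteq> polyfuns. Z = {x \<in> affine_space I. \<forall>p\<in>P. p x = 0})"

definition zariski_closure :: "'i set \<Rightarrow> ('i \<Rightarrow> 'k::comm_ring_1) set \<Rightarrow> ('i \<Rightarrow> 'k) set" where
  "zariski_closure I X = \<Inter>{Z. zariski_closed I Z \<and> X \<subseteq> Z}"

definition zariski_irreducible :: "'i set \<Rightarrow> ('i \<Rightarrow> 'k::comm_ring_1) set \<Rightarrow> bool" where
  "zariski_irreducible I Y \<longleftrightarrow> Y \<noteq> {} \<and>
     (\<forall>Z1 Z2. zariski_closed I Z1 \<longrightarrow> zariski_closed I Z2 \<longrightarrow>
        Y = (Y \<inter> Z1) \<union> (Y \<inter> Z2) \<longrightarrow> Y \<inter> Z1 = Y \<or> Y \<inter> Z2 = Y)"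

definition irreducible_component :: "'i set \<Rightarrow> ('i \<Rightarrow> 'k::comm_ring_1) set \<Rightarrow> ('i \<Rightarrow> 'k) set \<Rightarrow> bool" where
  "irreducible_component I X C \<longleftrightarrow> C \<subseteq> X \<and> zariski_irreducible I C \<and>
     (\<forall>D. C \<subseteq> D \<longrightarrow> D \<subseteq> X \<longrightarrow> zariski_irreducible I D \<longrightarrow> D = C)"

text \<open>Bases are fixed: U = k^u, V = k^v, W = k^w, the multiplication f is
  given by structure constants: f(e_i \<otimes> e_j) = sum_{l<w} fc i j l e_l.
  A point of Hom(k^a\<otimes>U,k^b) x Hom(k^b\<otimes>V,k^c) x Hom(k^a\<otimes>W,k^c) is a function on
  the index type below:
    Inl (p,i,q)       : coefficient of e_q in phi01(e_p \<otimes> e_i),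
    Inr (Inl (q,j,r)) : coefficient of e_r in phi12(e_q \<otimes> e_j),
    Inr (Inr (p,l,r)) : coefficient of e_r in phi02(e_p \<otimes> e_l).\<close>

type_synonym ridx = "(nat \<times> nat \<times> nat) + (nat \<times> nat \<times> nat) + (nat \<times> nat \<times> nat)"

definition rep_index :: "nat \<Rightarrow> nat \<Rightarrow> nat \<Rightarrow> nat \<Rightarrow> nat \<Rightarrow> nat \<Rightarrow> ridx set" where
  "rep_index u v w a b c =
     Inl ` ({..<a} \<times> {..<u} \<times> {..<b}) \<union>
     Inr ` Inl ` ({..<b} \<times> {..<v} \<times> {..<c}) \<union>
     Inr ` Inr ` ({..<a} \<times> {..<w} \<times> {..<c})"

text \<open>Index set of R(U,(a b)) = Hom(k^a \<otimes> U, k^b).\<close>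
definition left_index :: "nat \<Rightarrow> nat \<Rightarrow> nat \<Rightarrow> (nat \<times> nat \<times> nat) set" where
  "left_index u a b = {..<a} \<times> {..<u} \<times> {..<b}"

definition rep_variety ::
  "nat \<Rightarrow> nat \<Rightarrow> nat \<Rightarrow> (nat \<Rightarrow> nat \<Rightarrow> nat \<Rightarrow> 'k::comm_ring_1) \<Rightarrow> nat \<Rightarrow> nat \<Rightarrow> nat \<Rightarrow> (ridx \<Rightarrow> 'k) set" where
  "rep_variety u v w fc a b c =
     {x \<in> affine_space (rep_index u v w a b c).
        \<forall>p<a. \<forall>i<u. \<forall>j<v. \<forall>r<c.
          (\<Sum>q<b. x (Inl (p, i, q)) * x (Inr (Inl (q, j, r))))
          = (\<Sum>l<w. fc i j l * x (Inr (Inr (p, l, r))))}"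

definition restrict_left :: "(ridx \<Rightarrow> 'k) \<Rightarrow> (nat \<times> nat \<times> nat \<Rightarrow> 'k)" where
  "restrict_left x = (\<lambda>t. x (Inl t))"

definition left_general ::
  "nat \<Rightarrow> nat \<Rightarrow> nat \<Rightarrow> (nat \<Rightarrow> nat \<Rightarrow> nat \<Rightarrow> 'k::comm_ring_1) \<Rightarrow> nat \<Rightarrow> nat \<Rightarrow> nat \<Rightarrow> (ridx \<Rightarrow> 'k) set \<Rightarrow> bool" where
  "left_general u v w fc a b c C \<longleftrightarrow>
     irreducible_component (rep_index u v w a b c) (rep_variety u v w fc a b c) C \<and>
     zariski_closure (left_index u a b) (restrict_left ` C) = affine_space (left_index u a b)"

end

theory Submission
  imports Defs "Jordan_Normal_Form.Determinant"
begin

text \<open>For fixed \<open>\<phi>\<^sub>0\<^sub>1\<close> the defining relations of \<open>R(f,\<alpha>)\<close> are linear in \<open>(\<phi>\<^sub>1\<^sub>2, \<phi>\<^sub>0\<^sub>2)\<close>, so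
  \<open>R(f,\<alpha>)\<close> is the family of kernels of a matrix \<open>M(\<phi>\<^sub>0\<^sub>1)\<close> whose entries are polynomial in
  \<open>\<phi>\<^sub>0\<^sub>1\<close>. Let \<open>r\<close> be the generic rank of \<open>M\<close> and \<open>\<Delta>\<close> an \<open>r \<times> r\<close> minor that does not vanish
  identically. As all \<open>(r+1)\<close>-minors vanish, Cramer's rule parametrises the kernel polynomially
  wherever \<open>\<Delta> \<noteq> 0\<close>; hence the part \<open>Y\<close> of \<open>R(f,\<alpha>)\<close> over \<open>\<Delta> \<noteq> 0\<close> is a polynomial image of an
  open subset of affine space and is irreducible (the field being infinite). Its closure is an
  irreducible component; it is left general because \<open>Y\<close> contains the zero section over \<open>\<Delta> \<noteq> 0\<close>.
  Any other component lies in \<open>\<Delta>(\<phi>\<^sub>0\<^sub>1) = 0\<close>, so its projection is not dense.\<close>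

section \<open>Polynomial functions\<close>

lemma polyfuns_uminus: "p \<in> polyfuns \<Longrightarrow> (\<lambda>x. - p x) \<in> polyfuns"
  using polyfuns.mult[OF polyfuns.const[of "-1"], of p] by simp

lemma polyfuns_sum:
  "finite S \<Longrightarrow> (\<And>s. s \<in> S \<Longrightarrow> f s \<in> polyfuns) \<Longrightarrow> (\<lambda>x. \<Sum>s\<in>S. f s x) \<in> polyfuns"
proof (induction S rule: finite_induct)
  case empty
  then show ?case using polyfuns.const[of 0] by simp
next
  case (insert a F)
  then show ?case using polyfuns.add[of "f a" "\<lambda>x. \<Sum>s\<in>F. f s x"] by simp
qed

lemma polyfuns_prod:
  "finite S \<Longrightarrow> (\<And>s. s \<in> S \<Longrightarrow> f s \<in> polyfuns) \<Longrightarrow> (\<lambda>x. \<Prod>s\<in>S. f s x) \<in> polyfuns"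
proof (induction S rule: finite_induct)
  case empty
  then show ?case using polyfuns.const[of 1] by simp
next
  case (insert a F)
  then show ?case using polyfuns.mult[of "f a" "\<lambda>x. \<Prod>s\<in>F. f s x"] by simp
qed

lemma polyfuns_compose:
  "p \<in> polyfuns \<Longrightarrow> (\<And>j. (\<lambda>x. G x j) \<in> polyfuns) \<Longrightarrow> (\<lambda>x. p (G x)) \<in> polyfuns"
proof (induction p rule: polyfuns.induct)
  case (add p q)
  then show ?case using polyfuns.add by blast
next
  case (mult p q)
  then show ?case using polyfuns.mult by blast
qed (simp_all add: polyfuns.const)

lemma polyfuns_comp_Inl: "p \<in> polyfuns \<Longrightarrow> (\<lambda>z. p (z \<circ> Inl)) \<in> polyfuns"
  by (rule polyfuns_compose[of p "\<lambda>z. z \<circ> Inl"]) (simp_all add: polyfuns.var)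

lemma polyfuns_det:
  assumes "\<And>x. M x \<in> carrier_mat n n"
    and "\<And>i j. i < n \<Longrightarrow> j < n \<Longrightarrow> (\<lambda>x. M x $$ (i,j)) \<in> polyfuns"
  shows "(\<lambda>x. det (M x)) \<in> polyfuns"
proof -
  have "(\<lambda>x. \<Sum>p\<in>{p. p permutes {0..<n}}. signof p * (\<Prod>i=0..<n. M x $$ (i, p i))) \<in> polyfuns"
  proof (rule polyfuns_sum)
    show "finite {p. p permutes {0..<n}}" by (simp add: finite_permutations)
    fix p assume p: "p \<in> {p. p permutes {0..<n}}"
    show "(\<lambda>x. signof p * (\<Prod>i=0..<n. M x $$ (i, p i))) \<in> polyfuns"
    proof (rule polyfuns.mult[OF polyfuns.const], rule polyfuns_prod)
      fix i assume i: "i \<in> {0..<n}"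
      then have "p i < n" using p permutes_in_image by fastforce
      then show "(\<lambda>x. M x $$ (i, p i)) \<in> polyfuns" using assms(2) i by auto
    qed simp
  qed
  then show ?thesis using det_def'[OF assms(1)] by simp
qed

lemma polyfuns_adj_mat:
  assumes M: "\<And>x. M x \<in> carrier_mat n n"
    and entries: "\<And>i j. i < n \<Longrightarrow> j < n \<Longrightarrow> (\<lambda>x. M x $$ (i,j)) \<in> polyfuns"
    and ij: "i < n" "j < n"
  shows "(\<lambda>x. adj_mat (M x) $$ (i,j)) \<in> polyfuns"
proof -
  have "(\<lambda>x. adj_mat (M x) $$ (i,j)) = (\<lambda>x. (-1)^(j+i) * det (mat_delete (M x) j i))"
    using ij by (simp add: adj_mat_def cofactor_def carrier_matD[OF M])
  also have "\<dots> \<in> polyfuns"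
  proof (rule polyfuns.mult[OF polyfuns.const], rule polyfuns_det)
    show "mat_delete (M x) j i \<in> carrier_mat (n-1) (n-1)" for x
      by (rule mat_delete_carrier[OF M])
    fix i' j' assume "i' < n - 1" "j' < n - 1"
    then have "(\<lambda>x. mat_delete (M x) j i $$ (i', j'))
        = (\<lambda>x. M x $$ (if i' < j then i' else Suc i', if j' < i then j' else Suc j'))"
      by (simp add: mat_delete_def carrier_matD[OF M])
    also have "\<dots> \<in> polyfuns"
      by (rule entries) (use \<open>i' < n - 1\<close> \<open>j' < n - 1\<close> in auto)
    finally show "(\<lambda>x. mat_delete (M x) j i $$ (i', j')) \<in> polyfuns" .
  qed
  finally show ?thesis .
qed

lemma polyfuns_on_line:
  fixes p :: "('i \<Rightarrow> 'k::comm_ring_1) \<Rightarrow> 'k"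
  shows "p \<in> polyfuns \<Longrightarrow> \<exists>P. \<forall>t. p (\<lambda>i. x i + t * d i) = poly P t"
proof (induction p rule: polyfuns.induct)
  case (const c)
  show ?case by (rule exI[of _ "[:c:]"]) simp
next
  case (var i)
  show ?case by (rule exI[of _ "[:x i, d i:]"]) (simp add: mult.commute)
next
  case (add p q)
  then obtain P Q where "\<forall>t. p (\<lambda>i. x i + t * d i) = poly P t" "\<forall>t. q (\<lambda>i. x i + t * d i) = poly Q t"
    by blast
  then show ?case by (intro exI[of _ "P + Q"]) simp
next
  case (mult p q)
  then obtain P Q where "\<forall>t. p (\<lambda>i. x i + t * d i) = poly P t" "\<forall>t. q (\<lambda>i. x i + t * d i) = poly Q t"
    by blast
  then show ?case by (intro exI[of _ "P * Q"]) simp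
qed

text \<open>Restrict \<open>p\<close> and \<open>q\<close> to the line through \<open>x\<close> and \<open>y\<close>: the product of the two nonzero
  univariate polynomials has only finitely many roots.\<close>
lemma affine_space_common_nonzero:
  fixes p q :: "('i \<Rightarrow> 'k::field) \<Rightarrow> 'k"
  assumes inf: "infinite (UNIV :: 'k set)"
    and p: "p \<in> polyfuns" and q: "q \<in> polyfuns"
    and x: "x \<in> affine_space J" and px: "p x \<noteq> 0"
    and y: "y \<in> affine_space J" and qy: "q y \<noteq> 0"
  shows "\<exists>z\<in>affine_space J. p z \<noteq> 0 \<and> q z \<noteq> 0"
proof -
  define d where "d = (\<lambda>i. y i - x i)"
  obtain P where P: "\<forall>t. p (\<lambda>i. x i + t * d i) = poly P t" using polyfuns_on_line[OF p] by blast
  obtain Q where Q: "\<forall>t. q (\<lambda>i. x i + t * d i) = poly Q t" using polyfuns_on_line[OF q] by blast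
  have "poly P 0 \<noteq> 0" using P[rule_format, of 0] px by simp
  moreover have "poly Q 1 \<noteq> 0" using Q[rule_format, of 1] qy by (simp add: d_def)
  ultimately have "P * Q \<noteq> 0" by auto
  then have "finite {t. poly (P * Q) t = 0}" by (rule poly_roots_finite)
  then obtain t where t: "poly (P * Q) t \<noteq> 0"
    using inf by (metis (mono_tags, lifting) finite_subset mem_Collect_eq subsetI)
  define z where "z = (\<lambda>i. x i + t * d i)"
  have "z \<in> affine_space J" using x y unfolding affine_space_def z_def d_def by auto
  moreover have "p z \<noteq> 0" "q z \<noteq> 0" using t P Q unfolding z_def by auto
  ultimately show ?thesis by blast
qed

section \<open>Zariski closure and irreducibility\<close>

definition poly_irreducible :: "('i \<Rightarrow> 'k::comm_ring_1) set \<Rightarrow> bool" where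
  "poly_irreducible Y \<longleftrightarrow> (\<forall>p\<in>polyfuns. \<forall>q\<in>polyfuns.
     (\<exists>y\<in>Y. p y \<noteq> 0) \<longrightarrow> (\<exists>y\<in>Y. q y \<noteq> 0) \<longrightarrow> (\<exists>y\<in>Y. p y \<noteq> 0 \<and> q y \<noteq> 0))"

lemma poly_irreducibleD:
  assumes "poly_irreducible Y" "p \<in> polyfuns" "q \<in> polyfuns"
    and "y1 \<in> Y" "p y1 \<noteq> 0" "y2 \<in> Y" "q y2 \<noteq> 0"
  shows "\<exists>y\<in>Y. p y \<noteq> 0 \<and> q y \<noteq> 0"
  using assms unfolding poly_irreducible_def by blast

lemma zariski_closed_zero_set: "p \<in> polyfuns \<Longrightarrow> zariski_closed I {x \<in> affine_space I. p x = 0}"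
  unfolding zariski_closed_def by (rule exI[of _ "{p}"]) auto

lemma zariski_closed_affine_space: "zariski_closed I (affine_space I)"
  unfolding zariski_closed_def by (rule exI[of _ "{}"]) auto

lemma zariski_closed_separating_poly:
  assumes "zariski_closed I Z" "y \<in> affine_space I" "y \<notin> Z"
  obtains p where "p \<in> polyfuns" "\<forall>z\<in>Z. p z = 0" "p y \<noteq> 0"
  using assms unfolding zariski_closed_def by blast

lemma zariski_irreducible_iff_poly_irreducible:
  assumes Y: "Y \<subseteq> affine_space I"
  shows "zariski_irreducible I Y \<longleftrightarrow> Y \<noteq> {} \<and> poly_irreducible Y"
proof
  assume irr: "zariski_irreducible I Y"
  have "poly_irreducible Y"
    unfolding poly_irreducible_def
  proof (intro ballI impI)
    fix p q
    assume p: "p \<in> polyfuns" and q: "q \<in> polyfuns" and "\<exists>y\<in>Y. p y \<noteq> 0" "\<exists>y\<in>Y. q y \<noteq> 0"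
    then have "Y \<inter> {x \<in> affine_space I. p x = 0} \<noteq> Y" "Y \<inter> {x \<in> affine_space I. q x = 0} \<noteq> Y"
      by blast+
    with irr zariski_closed_zero_set[OF p] zariski_closed_zero_set[OF q]
    have "Y \<noteq> (Y \<inter> {x \<in> affine_space I. p x = 0}) \<union> (Y \<inter> {x \<in> affine_space I. q x = 0})"
      unfolding zariski_irreducible_def by blast
    then show "\<exists>y\<in>Y. p y \<noteq> 0 \<and> q y \<noteq> 0" using Y by blast
  qed
  with irr show "Y \<noteq> {} \<and> poly_irreducible Y" unfolding zariski_irreducible_def by blast
next
  assume "Y \<noteq> {} \<and> poly_irreducible Y"
  then have ne: "Y \<noteq> {}" and irr: "poly_irreducible Y" by blast+
  show "zariski_irreducible I Y"
    unfolding zariski_irreducible_def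
  proof (intro conjI allI impI ne)
    fix Z1 Z2 assume Z1: "zariski_closed I Z1" and Z2: "zariski_closed I Z2"
      and cover: "Y = Y \<inter> Z1 \<union> Y \<inter> Z2"
    show "Y \<inter> Z1 = Y \<or> Y \<inter> Z2 = Y"
    proof (rule ccontr)
      assume "\<not> ?thesis"
      then obtain y1 y2 where y: "y1 \<in> Y" "y1 \<notin> Z1" "y2 \<in> Y" "y2 \<notin> Z2" by blast
      obtain p where p: "p \<in> polyfuns" "\<forall>z\<in>Z1. p z = 0" "p y1 \<noteq> 0"
        using zariski_closed_separating_poly[OF Z1] y Y by blast
      obtain q where q: "q \<in> polyfuns" "\<forall>z\<in>Z2. q z = 0" "q y2 \<noteq> 0"
        using zariski_closed_separating_poly[OF Z2] y Y by blast
      obtain y where "y \<in> Y" "p y \<noteq> 0" "q y \<noteq> 0"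
        using irr p q y unfolding poly_irreducible_def by blast
      with cover p(2) q(2) show False by blast
    qed
  qed
qed

lemma zariski_closure_upper: "X \<subseteq> zariski_closure I X"
  unfolding zariski_closure_def by blast

lemma zariski_closure_least: "zariski_closed I Z \<Longrightarrow> X \<subseteq> Z \<Longrightarrow> zariski_closure I X \<subseteq> Z"
  unfolding zariski_closure_def by blast

lemma zariski_closure_mono: "X \<subseteq> X' \<Longrightarrow> zariski_closure I X \<subseteq> zariski_closure I X'"
  unfolding zariski_closure_def by blast

lemma zariski_closure_subset_affine_space:
  "X \<subseteq> affine_space I \<Longrightarrow> zariski_closure I X \<subseteq> affine_space I"
  by (rule zariski_closure_least[OF zariski_closed_affine_space])

lemma zariski_closure_vanishing:
  assumes "X \<subseteq> affine_space I" "p \<in> polyfuns" "\<forall>y\<in>X. p y = 0" "x \<in> zariski_closure I X"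
  shows "p x = 0"
  using zariski_closure_least[OF zariski_closed_zero_set[OF assms(2)], of X] assms by blast

lemma zariski_closureI:
  assumes "x \<in> affine_space I" "\<And>p. p \<in> polyfuns \<Longrightarrow> \<forall>y\<in>X. p y = 0 \<Longrightarrow> p x = 0"
  shows "x \<in> zariski_closure I X"
  unfolding zariski_closure_def
proof (rule InterI, clarify)
  fix Z assume "zariski_closed I Z" "X \<subseteq> Z"
  then obtain P where "P \<subseteq> polyfuns" "Z = {x \<in> affine_space I. \<forall>p\<in>P. p x = 0}"
    unfolding zariski_closed_def by blast
  with assms \<open>X \<subseteq> Z\<close> show "x \<in> Z" by blast
qed

lemma zariski_closure_principal_open:
  fixes h :: "('i \<Rightarrow> 'k::field) \<Rightarrow> 'k"
  assumes inf: "infinite (UNIV :: 'k set)" and h: "h \<in> polyfuns"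
    and x0: "x0 \<in> affine_space I" "h x0 \<noteq> 0"
  shows "zariski_closure I {x \<in> affine_space I. h x \<noteq> 0} = affine_space I"
proof
  show "zariski_closure I {x \<in> affine_space I. h x \<noteq> 0} \<subseteq> affine_space I"
    by (rule zariski_closure_subset_affine_space) blast
  show "affine_space I \<subseteq> zariski_closure I {x \<in> affine_space I. h x \<noteq> 0}"
  proof (intro subsetI zariski_closureI)
    fix x :: "'i \<Rightarrow> 'k" and p
    assume x: "x \<in> affine_space I" and p: "p \<in> polyfuns"
      and "\<forall>y\<in>{x \<in> affine_space I. h x \<noteq> 0}. p y = 0"
    then show "p x = 0" using affine_space_common_nonzero[where q = h, OF inf p h x _ x0] by blast
  qed
qed

lemma poly_irreducible_zariski_closure:
  assumes X: "X \<subseteq> affine_space I" and irr: "poly_irreducible X"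
  shows "poly_irreducible (zariski_closure I X)"
  unfolding poly_irreducible_def
proof (intro ballI impI)
  fix p q assume p: "p \<in> polyfuns" and q: "q \<in> polyfuns"
    and "\<exists>y\<in>zariski_closure I X. p y \<noteq> 0" "\<exists>y\<in>zariski_closure I X. q y \<noteq> 0"
  then have "\<exists>y\<in>X. p y \<noteq> 0" "\<exists>y\<in>X. q y \<noteq> 0"
    using zariski_closure_vanishing[OF X p] zariski_closure_vanishing[OF X q] by blast+
  then obtain y where "y \<in> X" "p y \<noteq> 0" "q y \<noteq> 0"
    using irr p q unfolding poly_irreducible_def by blast
  then show "\<exists>y\<in>zariski_closure I X. p y \<noteq> 0 \<and> q y \<noteq> 0"
    using zariski_closure_upper by blast
qed

lemma poly_irreducible_polynomial_image:
  fixes G :: "('i \<Rightarrow> 'k::field) \<Rightarrow> 'j \<Rightarrow> 'k"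
  assumes inf: "infinite (UNIV :: 'k set)" and h: "h \<in> polyfuns"
    and G: "\<And>j. (\<lambda>z. G z j) \<in> polyfuns"
  shows "poly_irreducible (G ` {z \<in> affine_space I. h z \<noteq> 0})"
  unfolding poly_irreducible_def
proof (intro ballI impI)
  fix p q :: "('j \<Rightarrow> 'k) \<Rightarrow> 'k" assume p: "p \<in> polyfuns" and q: "q \<in> polyfuns"
    and "\<exists>y\<in>G ` {z \<in> affine_space I. h z \<noteq> 0}. p y \<noteq> 0"
    and "\<exists>y\<in>G ` {z \<in> affine_space I. h z \<noteq> 0}. q y \<noteq> 0"
  then obtain z1 z2 where z1: "z1 \<in> affine_space I" "p (G z1) * h z1 \<noteq> 0"
    and z2: "z2 \<in> affine_space I" "q (G z2) * h z2 \<noteq> 0" by auto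
  have pG: "(\<lambda>z. p (G z) * h z) \<in> polyfuns" and qG: "(\<lambda>z. q (G z) * h z) \<in> polyfuns"
    by (intro polyfuns.mult polyfuns_compose[OF p G] polyfuns_compose[OF q G] h)+
  obtain z where "z \<in> affine_space I" "p (G z) * h z \<noteq> 0" "q (G z) * h z \<noteq> 0"
    using affine_space_common_nonzero[where p = "\<lambda>z. p (G z) * h z" and q = "\<lambda>z. q (G z) * h z",
        OF inf pG qG z1 z2] by blast
  then show "\<exists>y\<in>G ` {z \<in> affine_space I. h z \<noteq> 0}. p y \<noteq> 0 \<and> q y \<noteq> 0" by auto
qed

lemma irreducible_subset_zariski_closure_principal_open:
  assumes D: "D \<subseteq> R" "zariski_irreducible I D" and R: "R \<subseteq> affine_space I"
    and h: "h \<in> polyfuns" and hD: "d \<in> D" "h d \<noteq> 0"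
  shows "D \<subseteq> zariski_closure I {z \<in> R. h z \<noteq> 0}"
proof (intro subsetI zariski_closureI)
  fix x assume x: "x \<in> D"
  then show "x \<in> affine_space I" using D R by blast
  have irr: "poly_irreducible D"
    using zariski_irreducible_iff_poly_irreducible[of D I] D R by blast
  fix p assume p: "p \<in> polyfuns" and vanish: "\<forall>y\<in>{z \<in> R. h z \<noteq> 0}. p y = 0"
  show "p x = 0"
  proof (rule ccontr)
    assume "p x \<noteq> 0"
    with poly_irreducibleD[where q = h, OF irr p h x _ hD] obtain y where "y \<in> D" "p y \<noteq> 0" "h y \<noteq> 0"
      by blast
    with D(1) vanish show False by blast
  qed
qed

lemma irreducible_component_zariski_closure_principal_open:
  assumes R: "R \<subseteq> affine_space I" "zariski_closed I R" and h: "h \<in> polyfuns"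
    and z0: "z0 \<in> R" "h z0 \<noteq> 0" and irr: "poly_irreducible {z \<in> R. h z \<noteq> 0}"
  shows "irreducible_component I R (zariski_closure I {z \<in> R. h z \<noteq> 0})"
    (is "irreducible_component I R ?C")
  unfolding irreducible_component_def
proof (intro conjI allI impI)
  have Y: "{z \<in> R. h z \<noteq> 0} \<subseteq> affine_space I" using R by blast
  have z0C: "z0 \<in> ?C" using z0 zariski_closure_upper[of "{z \<in> R. h z \<noteq> 0}" I] by blast
  show "?C \<subseteq> R" by (rule zariski_closure_least[OF R(2)]) blast
  show "zariski_irreducible I ?C"
    unfolding zariski_irreducible_iff_poly_irreducible[OF zariski_closure_subset_affine_space[OF Y]]
    using poly_irreducible_zariski_closure[OF Y irr] z0C by blast
  fix D assume D: "?C \<subseteq> D" "D \<subseteq> R" "zariski_irreducible I D"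
  have "D \<subseteq> ?C"
    using irreducible_subset_zariski_closure_principal_open[OF D(2,3) R(1) h] z0C D(1) z0(2) by blast
  with D(1) show "D = ?C" by (rule subset_antisym[rotated])
qed

lemma irreducible_component_eq_zariski_closure_principal_open:
  assumes C: "irreducible_component I R C"
    and C0: "irreducible_component I R (zariski_closure I {z \<in> R. h z \<noteq> 0})"
    and R: "R \<subseteq> affine_space I" and h: "h \<in> polyfuns" and hC: "z \<in> C" "h z \<noteq> 0"
  shows "C = zariski_closure I {z \<in> R. h z \<noteq> 0}"
proof -
  have CR: "C \<subseteq> R" "zariski_irreducible I C"
    and maximal: "\<And>D. C \<subseteq> D \<Longrightarrow> D \<subseteq> R \<Longrightarrow> zariski_irreducible I D \<Longrightarrow> D = C"
    using C unfolding irreducible_component_def by blast+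
  have "C \<subseteq> zariski_closure I {z \<in> R. h z \<noteq> 0}"
    by (rule irreducible_subset_zariski_closure_principal_open[where h = h, OF CR R h hC])
  then show ?thesis
    using maximal C0 unfolding irreducible_component_def by blast
qed

section \<open>Minors and Cramer's rule\<close>

definition minor :: "('e \<Rightarrow> 'b \<Rightarrow> 'k) \<Rightarrow> (nat \<Rightarrow> 'e) \<Rightarrow> (nat \<Rightarrow> 'b) \<Rightarrow> nat \<Rightarrow> 'k mat" where
  "minor M \<rho> \<sigma> n = mat n n (\<lambda>(i,j). M (\<rho> i) (\<sigma> j))"

lemma minor_carrier [simp]: "minor M \<rho> \<sigma> n \<in> carrier_mat n n"
  unfolding minor_def by simp

lemma minor_index [simp]: "i < n \<Longrightarrow> j < n \<Longrightarrow> minor M \<rho> \<sigma> n $$ (i,j) = M (\<rho> i) (\<sigma> j)"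
  unfolding minor_def by simp

definition minors_vanish :: "('e \<Rightarrow> 'b \<Rightarrow> 'k::comm_ring_1) \<Rightarrow> 'e set \<Rightarrow> 'b set \<Rightarrow> nat \<Rightarrow> bool" where
  "minors_vanish M E B n \<longleftrightarrow> (\<forall>\<rho> \<sigma>. inj_on \<rho> {..<n} \<longrightarrow> \<rho> ` {..<n} \<subseteq> E \<longrightarrow>
     inj_on \<sigma> {..<n} \<longrightarrow> \<sigma> ` {..<n} \<subseteq> B \<longrightarrow> det (minor M \<rho> \<sigma> n) = 0)"

lemma exists_maximal_nonzero_minor:
  fixes M :: "'x \<Rightarrow> 'e \<Rightarrow> 'b \<Rightarrow> 'k::comm_ring_1"
  assumes B: "finite B" and "x0 \<in> P"
  obtains x \<rho> r \<sigma> where "x \<in> P" "inj_on \<rho> {..<r}" "\<rho> ` {..<r} \<subseteq> E"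
    "inj_on \<sigma> {..<r}" "\<sigma> ` {..<r} \<subseteq> B" "det (minor (M x) \<rho> \<sigma> r) \<noteq> 0"
    "\<And>x. x \<in> P \<Longrightarrow> minors_vanish (M x) E B (Suc r)"
proof -
  define nonzero where "nonzero n \<longleftrightarrow> (\<exists>\<rho> \<sigma>. \<exists>x\<in>P. inj_on \<rho> {..<n} \<and> \<rho> ` {..<n} \<subseteq> E
      \<and> inj_on \<sigma> {..<n} \<and> \<sigma> ` {..<n} \<subseteq> B \<and> det (minor (M x) \<rho> \<sigma> n) \<noteq> 0)" for n
  have "nonzero 0" unfolding nonzero_def using \<open>x0 \<in> P\<close> by auto
  have bounded: "n \<le> card B" if "nonzero n" for n
  proof -
    from that obtain \<sigma> where "inj_on \<sigma> {..<n}" "\<sigma> ` {..<n} \<subseteq> B" unfolding nonzero_def by blast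
    from card_inj_on_le[OF this B] show ?thesis by simp
  qed
  define r where "r = (GREATEST n. nonzero n)"
  have "nonzero r" unfolding r_def by (rule GreatestI_nat[where P = nonzero, OF \<open>nonzero 0\<close> bounded])
  moreover have "\<not> nonzero (Suc r)"
    using Greatest_le_nat[of nonzero _ "card B"] bounded unfolding r_def[symmetric] by force
  then have "minors_vanish (M x) E B (Suc r)" if "x \<in> P" for x
    using that unfolding nonzero_def minors_vanish_def by blast
  ultimately show ?thesis using that unfolding nonzero_def by blast
qed

definition bordered_mat :: "'a mat \<Rightarrow> (nat \<Rightarrow> 'a) \<Rightarrow> (nat \<Rightarrow> 'a) \<Rightarrow> 'a \<Rightarrow> 'a mat" where
  "bordered_mat A b c d = mat (Suc (dim_row A)) (Suc (dim_col A)) (\<lambda>(i,j).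
     if i < dim_row A then (if j < dim_col A then A $$ (i,j) else b i)
     else (if j < dim_col A then c j else d))"

lemma bordered_mat_carrier: "A \<in> carrier_mat r r \<Longrightarrow> bordered_mat A b c d \<in> carrier_mat (Suc r) (Suc r)"
  unfolding bordered_mat_def by auto

lemma cofactor_bordered_mat_last_column:
  fixes A :: "'a::comm_ring_1 mat"
  assumes A: "A \<in> carrier_mat r r" and i: "i < r"
  shows "cofactor (bordered_mat A b c d) i r = - (\<Sum>t<r. c t * cofactor A i t)"
proof -
  obtain r' where r': "r = Suc r'" using i by (cases r) auto
  define X where "X = mat_delete (bordered_mat A b c d) i r"
  have X: "X \<in> carrier_mat r r"
    unfolding X_def using mat_delete_carrier[OF bordered_mat_carrier[OF A]] by simp
  have "det X = (\<Sum>t<r. X $$ (r',t) * cofactor X r' t)"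
    by (rule laplace_expansion_row[OF X]) (simp add: r')
  also have "\<dots> = (\<Sum>t<r. c t * ((-1)^(r'+t) * det (mat_delete A i t)))"
  proof (rule sum.cong[OF refl])
    fix t assume t: "t \<in> {..<r}"
    have "X $$ (r',t) = c t" using A i t r' by (auto simp: X_def bordered_mat_def mat_delete_def)
    moreover have "mat_delete X r' t = mat_delete A i t"
      by (rule eq_matI) (use A i t r' in \<open>auto simp: mat_delete_def X_def bordered_mat_def\<close>)
    ultimately show "X $$ (r',t) * cofactor X r' t = c t * ((-1)^(r'+t) * det (mat_delete A i t))"
      unfolding cofactor_def by simp
  qed
  finally have det_X: "det X = (\<Sum>t<r. c t * ((-1)^(r'+t) * det (mat_delete A i t)))" .
  have sign: "(-1::'a)^(i+r) * (-1)^(r'+t) = - ((-1)^(i+t))" for t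
  proof -
    have e: "(i+r) + (r'+t) = (i+t) + 2*r' + 1" using r' by simp
    have "(-1::'a)^(i+r) * (-1)^(r'+t) = (-1)^((i+r) + (r'+t))" by (simp add: power_add)
    also have "\<dots> = (-1)^(i+t) * ((-1)^2)^r' * (-1)" unfolding e power_add power_mult by simp
    finally show ?thesis by simp
  qed
  have "cofactor (bordered_mat A b c d) i r = (-1)^(i+r) * det X" unfolding cofactor_def X_def ..
  also have "\<dots> = (\<Sum>t<r. c t * ((-1)^(i+r) * (-1)^(r'+t) * det (mat_delete A i t)))"
    unfolding det_X sum_distrib_left by (rule sum.cong[OF refl]) (simp add: algebra_simps)
  also have "\<dots> = - (\<Sum>t<r. c t * cofactor A i t)"
    unfolding sign cofactor_def sum_negf[symmetric] by (rule sum.cong[OF refl]) simp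
  finally show ?thesis .
qed

lemma det_bordered_mat:
  fixes A :: "'a::comm_ring_1 mat"
  assumes A: "A \<in> carrier_mat r r"
  shows "det (bordered_mat A b c d) = d * det A - (\<Sum>i<r. b i * (\<Sum>t<r. c t * cofactor A i t))"
proof -
  let ?A' = "bordered_mat A b c d"
  have "det ?A' = (\<Sum>i<Suc r. ?A' $$ (i,r) * cofactor ?A' i r)"
    by (rule laplace_expansion_column[OF bordered_mat_carrier[OF A]]) simp
  also have "\<dots> = (\<Sum>i<r. ?A' $$ (i,r) * cofactor ?A' i r) + ?A' $$ (r,r) * cofactor ?A' r r"
    by simp
  also have "\<dots> = (\<Sum>i<r. b i * - (\<Sum>t<r. c t * cofactor A i t)) + d * cofactor ?A' r r"
  proof -
    have "?A' $$ (i,r) = b i" if "i < r" for i using A that by (simp add: bordered_mat_def)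
    moreover have "?A' $$ (r,r) = d" using A by (simp add: bordered_mat_def)
    ultimately show ?thesis by (simp add: cofactor_bordered_mat_last_column[OF A])
  qed
  also have "mat_delete ?A' r r = A"
    by (rule eq_matI) (use A in \<open>auto simp: mat_delete_def bordered_mat_def\<close>)
  then have "cofactor ?A' r r = det A" by (simp add: cofactor_def flip: mult_2)
  finally show ?thesis by (simp add: sum_negf algebra_simps)
qed

lemma adj_mat_mult_index:
  assumes A: "A \<in> carrier_mat r r" and "s0 < r" "s < r"
  shows "(\<Sum>i<r. adj_mat A $$ (s0,i) * A $$ (i,s)) = (if s0 = s then det A else 0)"
proof -
  have "(\<Sum>i<r. adj_mat A $$ (s0,i) * A $$ (i,s)) = (adj_mat A * A) $$ (s0,s)"
    using adj_mat(1)[OF A] A assms by (simp add: scalar_prod_def lessThan_atLeast0)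
  also have "\<dots> = (det A \<cdot>\<^sub>m 1\<^sub>m r) $$ (s0,s)" using adj_mat(3)[OF A] by simp
  finally show ?thesis using assms by simp
qed

lemma adj_mat_index: "A \<in> carrier_mat r r \<Longrightarrow> s < r \<Longrightarrow> i < r \<Longrightarrow> adj_mat A $$ (s,i) = cofactor A i s"
  unfolding adj_mat_def by simp

text \<open>Given an \<open>r \<times> r\<close> minor on rows \<open>\<rho>\<close> and columns \<open>\<sigma>\<close>, keep the coordinates of \<open>w\<close> outside
  \<open>\<sigma>\<close>, scaled by the minor, and solve for those in \<open>\<sigma>\<close> by Cramer's rule (the adjugate).\<close>
definition cramer_kernel ::
  "('e \<Rightarrow> 'b \<Rightarrow> 'k::comm_ring_1) \<Rightarrow> (nat \<Rightarrow> 'e) \<Rightarrow> (nat \<Rightarrow> 'b) \<Rightarrow> nat \<Rightarrow> 'b set \<Rightarrow> ('b \<Rightarrow> 'k) \<Rightarrow> 'b \<Rightarrow> 'k"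
  where
  "cramer_kernel M \<rho> \<sigma> r B w \<beta> = (if \<beta> \<in> \<sigma> ` {..<r}
     then - (\<Sum>i<r. adj_mat (minor M \<rho> \<sigma> r) $$ (inv_into {..<r} \<sigma> \<beta>, i)
                     * (\<Sum>\<beta>'\<in>B - \<sigma> ` {..<r}. M (\<rho> i) \<beta>' * w \<beta>'))
     else det (minor M \<rho> \<sigma> r) * w \<beta>)"

lemma cramer_kernel_scale: "cramer_kernel M \<rho> \<sigma> r B (\<lambda>\<beta>. c * w \<beta>) \<beta> = c * cramer_kernel M \<rho> \<sigma> r B w \<beta>"
  unfolding cramer_kernel_def by (simp add: sum_distrib_left algebra_simps)

lemma cramer_kernel_of_kernel:
  fixes M :: "'e \<Rightarrow> 'b \<Rightarrow> 'k::comm_ring_1"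
  assumes B: "finite B" and \<sigma>: "inj_on \<sigma> {..<r}" "\<sigma> ` {..<r} \<subseteq> B" and \<rho>: "\<rho> ` {..<r} \<subseteq> E"
    and kernel: "\<forall>e\<in>E. (\<Sum>\<beta>\<in>B. M e \<beta> * w \<beta>) = 0"
  shows "cramer_kernel M \<rho> \<sigma> r B w \<beta> = det (minor M \<rho> \<sigma> r) * w \<beta>"
proof (cases "\<beta> \<in> \<sigma> ` {..<r}")
  case False
  then show ?thesis unfolding cramer_kernel_def by simp
next
  case True
  then obtain s0 where s0: "s0 < r" "\<beta> = \<sigma> s0" by blast
  let ?S = "\<sigma> ` {..<r}" and ?Mr = "minor M \<rho> \<sigma> r"
  have row: "(\<Sum>\<beta>'\<in>B - ?S. M (\<rho> i) \<beta>' * w \<beta>') = - (\<Sum>s<r. ?Mr $$ (i,s) * w (\<sigma> s))"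
    if i: "i < r" for i
  proof -
    have "0 = (\<Sum>\<beta>\<in>B. M (\<rho> i) \<beta> * w \<beta>)" using kernel \<rho> i by auto
    also have "\<dots> = (\<Sum>\<beta>'\<in>B - ?S. M (\<rho> i) \<beta>' * w \<beta>') + (\<Sum>\<beta>'\<in>?S. M (\<rho> i) \<beta>' * w \<beta>')"
      by (rule sum.subset_diff[OF \<sigma>(2) B])
    also have "(\<Sum>\<beta>'\<in>?S. M (\<rho> i) \<beta>' * w \<beta>') = (\<Sum>s<r. ?Mr $$ (i,s) * w (\<sigma> s))"
      by (subst sum.reindex[OF \<sigma>(1)]) (simp add: i)
    finally show ?thesis by (simp add: eq_neg_iff_add_eq_0)
  qed
  have "cramer_kernel M \<rho> \<sigma> r B w \<beta>
      = (\<Sum>i<r. adj_mat ?Mr $$ (s0, i) * (\<Sum>s<r. ?Mr $$ (i,s) * w (\<sigma> s)))"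
    using True s0 \<sigma>(1) by (simp add: cramer_kernel_def row sum_negf)
  also have "\<dots> = (\<Sum>i<r. \<Sum>s<r. adj_mat ?Mr $$ (s0, i) * ?Mr $$ (i,s) * w (\<sigma> s))"
    by (simp add: sum_distrib_left mult.assoc)
  also have "\<dots> = (\<Sum>s<r. \<Sum>i<r. adj_mat ?Mr $$ (s0, i) * ?Mr $$ (i,s) * w (\<sigma> s))"
    by (rule sum.swap)
  also have "\<dots> = (\<Sum>s<r. (\<Sum>i<r. adj_mat ?Mr $$ (s0, i) * ?Mr $$ (i,s)) * w (\<sigma> s))"
    by (simp add: sum_distrib_right)
  also have "\<dots> = (\<Sum>s<r. (if s0 = s then det ?Mr else 0) * w (\<sigma> s))"
    by (rule sum.cong[OF refl], subst adj_mat_mult_index[OF minor_carrier s0(1)]) auto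
  also have "\<dots> = det ?Mr * w \<beta>" using s0 by (simp add: if_distrib[of "\<lambda>x. x * _"] cong: if_cong)
  finally show ?thesis .
qed

text \<open>Bordering the pivot minor by row \<open>e\<close> and column \<open>\<beta>\<close> gives an \<open>(r+1)\<close>-minor, which vanishes;
  this is its expansion along the last row and column.\<close>
lemma bordered_minor_identity:
  fixes M :: "'e \<Rightarrow> 'b \<Rightarrow> 'k::comm_ring_1"
  assumes \<rho>: "inj_on \<rho> {..<r}" "\<rho> ` {..<r} \<subseteq> E" and \<sigma>: "inj_on \<sigma> {..<r}" "\<sigma> ` {..<r} \<subseteq> B"
    and vanish: "minors_vanish M E B (Suc r)" and e: "e \<in> E" and \<beta>: "\<beta> \<in> B - \<sigma> ` {..<r}"
  shows "(\<Sum>s<r. \<Sum>i<r. M e (\<sigma> s) * cofactor (minor M \<rho> \<sigma> r) i s * M (\<rho> i) \<beta>)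
    = M e \<beta> * det (minor M \<rho> \<sigma> r)"
proof -
  let ?Mr = "minor M \<rho> \<sigma> r"
  have bordered: "minor M (\<rho>(r:=e)) (\<sigma>(r:=\<beta>)) (Suc r)
      = bordered_mat ?Mr (\<lambda>i. M (\<rho> i) \<beta>) (\<lambda>j. M e (\<sigma> j)) (M e \<beta>)"
    by (rule eq_matI) (auto simp: minor_def bordered_mat_def less_Suc_eq)
  have "det (minor M (\<rho>(r:=e)) (\<sigma>(r:=\<beta>)) (Suc r)) = 0"
  proof (cases "e \<in> \<rho> ` {..<r}")
    case True
    then obtain i0 where i0: "i0 < r" "e = \<rho> i0" by blast
    show ?thesis
    proof (rule det_identical_rows[OF minor_carrier, of i0 r])
      show "row (minor M (\<rho>(r := e)) (\<sigma>(r := \<beta>)) (Suc r)) i0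
          = row (minor M (\<rho>(r := e)) (\<sigma>(r := \<beta>)) (Suc r)) r"
        by (rule eq_vecI) (use i0 in \<open>auto simp: minor_def\<close>)
    qed (use i0 in auto)
  next
    case False
    have "inj_on (\<rho>(r:=e)) {..<Suc r}" "inj_on (\<sigma>(r:=\<beta>)) {..<Suc r}"
      using \<rho>(1) \<sigma>(1) False \<beta> by (auto simp: inj_on_def less_Suc_eq image_iff)
    moreover have "(\<rho>(r:=e)) ` {..<Suc r} \<subseteq> E" "(\<sigma>(r:=\<beta>)) ` {..<Suc r} \<subseteq> B"
      using \<rho>(2) \<sigma>(2) e \<beta> by (auto simp: less_Suc_eq)
    ultimately show ?thesis using vanish unfolding minors_vanish_def by blast
  qed
  then have "M e \<beta> * det ?Mr = (\<Sum>i<r. M (\<rho> i) \<beta> * (\<Sum>t<r. M e (\<sigma> t) * cofactor ?Mr i t))"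
    unfolding bordered det_bordered_mat[OF minor_carrier] by simp
  also have "\<dots> = (\<Sum>i<r. \<Sum>s<r. M e (\<sigma> s) * cofactor ?Mr i s * M (\<rho> i) \<beta>)"
    by (simp add: sum_distrib_left mult_ac)
  also have "\<dots> = (\<Sum>s<r. \<Sum>i<r. M e (\<sigma> s) * cofactor ?Mr i s * M (\<rho> i) \<beta>)"
    by (rule sum.swap)
  finally show ?thesis by simp
qed

lemma cramer_kernel_in_kernel:
  fixes M :: "'e \<Rightarrow> 'b \<Rightarrow> 'k::comm_ring_1"
  assumes B: "finite B" and \<rho>: "inj_on \<rho> {..<r}" "\<rho> ` {..<r} \<subseteq> E"
    and \<sigma>: "inj_on \<sigma> {..<r}" "\<sigma> ` {..<r} \<subseteq> B"
    and vanish: "minors_vanish M E B (Suc r)" and e: "e \<in> E"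
  shows "(\<Sum>\<beta>\<in>B. M e \<beta> * cramer_kernel M \<rho> \<sigma> r B w \<beta>) = 0"
proof -
  let ?S = "\<sigma> ` {..<r}" and ?F = "B - \<sigma> ` {..<r}" and ?Mr = "minor M \<rho> \<sigma> r"
  let ?v = "cramer_kernel M \<rho> \<sigma> r B w"
  have "(\<Sum>\<beta>\<in>B. M e \<beta> * ?v \<beta>) = (\<Sum>\<beta>\<in>?F. M e \<beta> * ?v \<beta>) + (\<Sum>\<beta>\<in>?S. M e \<beta> * ?v \<beta>)"
    by (rule sum.subset_diff[OF \<sigma>(2) B])
  also have "(\<Sum>\<beta>\<in>?F. M e \<beta> * ?v \<beta>) = (\<Sum>\<beta>\<in>?F. w \<beta> * (M e \<beta> * det ?Mr))"
    by (rule sum.cong[OF refl]) (simp add: cramer_kernel_def)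
  also have "(\<Sum>\<beta>\<in>?S. M e \<beta> * ?v \<beta>)
      = (\<Sum>s<r. M e (\<sigma> s) * - (\<Sum>i<r. cofactor ?Mr i s * (\<Sum>\<beta>'\<in>?F. M (\<rho> i) \<beta>' * w \<beta>')))"
  proof (subst sum.reindex[OF \<sigma>(1)], rule sum.cong[OF refl])
    fix s assume s: "s \<in> {..<r}"
    have "?v (\<sigma> s) = - (\<Sum>i<r. adj_mat ?Mr $$ (s, i) * (\<Sum>\<beta>'\<in>?F. M (\<rho> i) \<beta>' * w \<beta>'))"
      using s \<sigma>(1) by (simp add: cramer_kernel_def)
    also have "\<dots> = - (\<Sum>i<r. cofactor ?Mr i s * (\<Sum>\<beta>'\<in>?F. M (\<rho> i) \<beta>' * w \<beta>'))"
      using s by (auto simp: adj_mat_index[OF minor_carrier] intro!: sum.cong)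
    finally show "((\<lambda>\<beta>. M e \<beta> * ?v \<beta>) \<circ> \<sigma>) s
        = M e (\<sigma> s) * - (\<Sum>i<r. cofactor ?Mr i s * (\<Sum>\<beta>'\<in>?F. M (\<rho> i) \<beta>' * w \<beta>'))"
      by simp
  qed
  also have "\<dots> = - (\<Sum>\<beta>'\<in>?F. w \<beta>' * (\<Sum>s<r. \<Sum>i<r. M e (\<sigma> s) * cofactor ?Mr i s * M (\<rho> i) \<beta>'))"
    by (simp add: sum_distrib_left sum_negf mult_ac sum.swap[of _ ?F "{..<r}"])
  also have "\<dots> = - (\<Sum>\<beta>'\<in>?F. w \<beta>' * (M e \<beta>' * det ?Mr))"
    using bordered_minor_identity[OF \<rho> \<sigma> vanish e] by simp
  finally show ?thesis by simp
qed

lemma polyfuns_cramer_kernel: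
  assumes B: "finite B" and M: "\<And>e \<beta>. (\<lambda>x. M x e \<beta>) \<in> polyfuns"
    and w: "\<And>\<beta>. (\<lambda>x. w x \<beta>) \<in> polyfuns"
  shows "(\<lambda>x. cramer_kernel (M x) \<rho> \<sigma> r B (w x) \<beta>) \<in> polyfuns"
proof -
  have minor: "(\<lambda>x. minor (M x) \<rho> \<sigma> r $$ (i,j)) \<in> polyfuns" if "i < r" "j < r" for i j
    using that M by simp
  show ?thesis
  proof (cases "\<beta> \<in> \<sigma> ` {..<r}")
    case True
    then have s: "inv_into {..<r} \<sigma> \<beta> < r" using inv_into_into[OF True] by simp
    have "(\<lambda>x. adj_mat (minor (M x) \<rho> \<sigma> r) $$ (inv_into {..<r} \<sigma> \<beta>, i)
        * (\<Sum>\<beta>'\<in>B - \<sigma> ` {..<r}. M x (\<rho> i) \<beta>' * w x \<beta>')) \<in> polyfuns" if "i \<in> {..<r}" for i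
      using B that by (intro polyfuns.mult polyfuns_adj_mat[OF minor_carrier minor] polyfuns_sum M w s)
        simp_all
    then have "(\<lambda>x. - (\<Sum>i<r. adj_mat (minor (M x) \<rho> \<sigma> r) $$ (inv_into {..<r} \<sigma> \<beta>, i)
        * (\<Sum>\<beta>'\<in>B - \<sigma> ` {..<r}. M x (\<rho> i) \<beta>' * w x \<beta>'))) \<in> polyfuns"
      by (intro polyfuns_uminus polyfuns_sum finite_lessThan)
    with True show ?thesis unfolding cramer_kernel_def by simp
  next
    case False
    then show ?thesis
      unfolding cramer_kernel_def by (simp add: polyfuns.mult polyfuns_det[OF minor_carrier minor] w)
  qed
qed

section \<open>Families of kernels\<close>

definition kernel_variety ::
  "'a set \<Rightarrow> 'b set \<Rightarrow> 'e set \<Rightarrow> ('e \<Rightarrow> 'b \<Rightarrow> ('a \<Rightarrow> 'k::comm_ring_1) \<Rightarrow> 'k) \<Rightarrow> ('a + 'b \<Rightarrow> 'k) set"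
  where
  "kernel_variety A B E m = {z \<in> affine_space (Inl ` A \<union> Inr ` B).
     \<forall>e\<in>E. (\<Sum>\<beta>\<in>B. m e \<beta> (z \<circ> Inl) * z (Inr \<beta>)) = 0}"

lemma affine_space_Plus_iff:
  "z \<in> affine_space (Inl ` A \<union> Inr ` B) \<longleftrightarrow> z \<circ> Inl \<in> affine_space A \<and> z \<circ> Inr \<in> affine_space B"
  unfolding affine_space_def by (auto simp: split_sum_all)

lemma zariski_closed_kernel_variety:
  assumes "finite B" "\<And>e \<beta>. m e \<beta> \<in> polyfuns"
  shows "zariski_closed (Inl ` A \<union> Inr ` B) (kernel_variety A B E m)"
  unfolding zariski_closed_def kernel_variety_def
proof (intro exI conjI)
  let ?P = "(\<lambda>e z. \<Sum>\<beta>\<in>B. m e \<beta> (z \<circ> Inl) * z (Inr \<beta>)) ` E"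
  show "?P \<subseteq> polyfuns"
    using assms by (auto intro!: polyfuns_sum polyfuns.mult polyfuns_comp_Inl polyfuns.var)
  show "{z \<in> affine_space (Inl ` A \<union> Inr ` B). \<forall>e\<in>E. (\<Sum>\<beta>\<in>B. m e \<beta> (z \<circ> Inl) * z (Inr \<beta>)) = 0}
      = {z \<in> affine_space (Inl ` A \<union> Inr ` B). \<forall>p\<in>?P. p z = 0}"
    by auto
qed

locale pivot_minor =
  fixes A :: "'a set" and B :: "'b set" and E :: "'e set"
    and m :: "'e \<Rightarrow> 'b \<Rightarrow> ('a \<Rightarrow> 'k::field) \<Rightarrow> 'k"
    and r :: nat and \<rho> :: "nat \<Rightarrow> 'e" and \<sigma> :: "nat \<Rightarrow> 'b"
  assumes finite_B: "finite B"
    and polyfuns_m: "\<And>e \<beta>. m e \<beta> \<in> polyfuns"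
    and \<rho>: "inj_on \<rho> {..<r}" "\<rho> ` {..<r} \<subseteq> E"
    and \<sigma>: "inj_on \<sigma> {..<r}" "\<sigma> ` {..<r} \<subseteq> B"
    and minors_vanish: "\<And>\<phi>. \<phi> \<in> affine_space A \<Longrightarrow> minors_vanish (\<lambda>e \<beta>. m e \<beta> \<phi>) E B (Suc r)"
begin

definition pivot :: "('a \<Rightarrow> 'k) \<Rightarrow> 'k" where
  "pivot \<phi> = det (minor (\<lambda>e \<beta>. m e \<beta> \<phi>) \<rho> \<sigma> r)"

definition solve :: "('a + 'b \<Rightarrow> 'k) \<Rightarrow> 'a + 'b \<Rightarrow> 'k" where
  "solve z = case_sum (z \<circ> Inl)
     (\<lambda>\<beta>. if \<beta> \<in> B then cramer_kernel (\<lambda>e \<beta>. m e \<beta> (z \<circ> Inl)) \<rho> \<sigma> r B (z \<circ> Inr) \<beta> else 0)"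

lemma polyfuns_pivot: "pivot \<in> polyfuns"
  unfolding pivot_def by (rule polyfuns_det[OF minor_carrier]) (simp add: polyfuns_m)

lemma polyfuns_solve: "(\<lambda>z. solve z \<iota>) \<in> polyfuns"
proof (cases \<iota>)
  case (Inl \<alpha>)
  then show ?thesis by (simp add: solve_def polyfuns.var)
next
  case (Inr \<beta>)
  have "(\<lambda>z. cramer_kernel (\<lambda>e \<beta>. m e \<beta> (z \<circ> Inl)) \<rho> \<sigma> r B (z \<circ> Inr) \<beta>) \<in> polyfuns"
    by (rule polyfuns_cramer_kernel[OF finite_B])
      (simp_all add: polyfuns_comp_Inl[OF polyfuns_m] polyfuns.var)
  with Inr show ?thesis by (cases "\<beta> \<in> B") (simp_all add: solve_def polyfuns.const)
qed

lemma solve_Inl [simp]: "solve z \<circ> Inl = z \<circ> Inl"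
  by (simp add: solve_def fun_eq_iff)

lemma solve_in_kernel_variety:
  assumes z: "z \<in> affine_space (Inl ` A \<union> Inr ` B)"
  shows "solve z \<in> kernel_variety A B E m"
proof -
  have "solve z \<circ> Inr \<in> affine_space B" by (simp add: solve_def affine_space_def)
  with z have "solve z \<in> affine_space (Inl ` A \<union> Inr ` B)" by (simp add: affine_space_Plus_iff)
  moreover have "(\<Sum>\<beta>\<in>B. m e \<beta> (z \<circ> Inl) * solve z (Inr \<beta>)) = 0" if "e \<in> E" for e
  proof -
    have "(\<Sum>\<beta>\<in>B. m e \<beta> (z \<circ> Inl) * solve z (Inr \<beta>))
        = (\<Sum>\<beta>\<in>B. m e \<beta> (z \<circ> Inl) * cramer_kernel (\<lambda>e \<beta>. m e \<beta> (z \<circ> Inl)) \<rho> \<sigma> r B (z \<circ> Inr) \<beta>)"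
      by (simp add: solve_def)
    also have "\<dots> = 0"
      using z by (intro cramer_kernel_in_kernel[OF finite_B \<rho> \<sigma> minors_vanish that])
        (simp add: affine_space_Plus_iff)
    finally show ?thesis .
  qed
  ultimately show ?thesis unfolding kernel_variety_def by simp
qed

abbreviation generic_part :: "('a + 'b \<Rightarrow> 'k) set" where
  "generic_part \<equiv> {z \<in> kernel_variety A B E m. pivot (z \<circ> Inl) \<noteq> 0}"

lemma solve_rescale:
  assumes z: "z \<in> kernel_variety A B E m" and pz: "pivot (z \<circ> Inl) \<noteq> 0"
  shows "solve (case_sum (z \<circ> Inl) (\<lambda>\<beta>. inverse (pivot (z \<circ> Inl)) * z (Inr \<beta>))) = z"
    (is "solve ?y = z")
proof
  have kernel: "\<forall>e\<in>E. (\<Sum>\<beta>\<in>B. m e \<beta> (z \<circ> Inl) * z (Inr \<beta>)) = 0"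
    using z unfolding kernel_variety_def by blast
  fix \<iota> show "solve ?y \<iota> = z \<iota>"
  proof (cases \<iota>)
    case (Inl \<alpha>)
    then show ?thesis by (simp add: solve_def)
  next
    case (Inr \<beta>)
    have "solve ?y (Inr \<beta>) = z (Inr \<beta>)" if "\<beta> \<in> B"
    proof -
      have "solve ?y (Inr \<beta>) = inverse (pivot (z \<circ> Inl))
          * cramer_kernel (\<lambda>e \<beta>. m e \<beta> (z \<circ> Inl)) \<rho> \<sigma> r B (z \<circ> Inr) \<beta>"
        using that cramer_kernel_scale[where w = "z \<circ> Inr"] by (simp add: solve_def comp_def)
      also have "\<dots> = z (Inr \<beta>)"
        using pz by (simp add: cramer_kernel_of_kernel[OF finite_B \<sigma> \<rho>(2)] kernel pivot_def)
      finally show ?thesis .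
    qed
    moreover have "z (Inr \<beta>) = 0" if "\<beta> \<notin> B"
      using z that by (auto simp: kernel_variety_def affine_space_Plus_iff affine_space_def)
    ultimately show ?thesis using Inr by (auto simp: solve_def)
  qed
qed

lemma generic_part_eq_image:
  "generic_part = solve ` {z \<in> affine_space (Inl ` A \<union> Inr ` B). pivot (z \<circ> Inl) \<noteq> 0}"
proof (intro equalityI subsetI)
  fix z assume "z \<in> generic_part"
  then have z: "z \<in> kernel_variety A B E m" and pz: "pivot (z \<circ> Inl) \<noteq> 0" by blast+
  define y where "y = case_sum (z \<circ> Inl) (\<lambda>\<beta>. inverse (pivot (z \<circ> Inl)) * z (Inr \<beta>))"
  have y_Inl: "y \<circ> Inl = z \<circ> Inl" by (simp add: y_def fun_eq_iff)
  have "y \<in> affine_space (Inl ` A \<union> Inr ` B)"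
    using z by (simp add: kernel_variety_def affine_space_Plus_iff y_Inl) (simp add: affine_space_def y_def)
  moreover have "solve y = z" unfolding y_def by (rule solve_rescale[OF z pz])
  ultimately show "z \<in> solve ` {z \<in> affine_space (Inl ` A \<union> Inr ` B). pivot (z \<circ> Inl) \<noteq> 0}"
    using pz y_Inl by (intro image_eqI[where x = y]) auto
qed (use solve_in_kernel_variety in auto)

lemma zero_extension_in_kernel_variety:
  "\<phi> \<in> affine_space A \<Longrightarrow> case_sum \<phi> (\<lambda>_. 0) \<in> kernel_variety A B E m"
  by (simp add: kernel_variety_def affine_space_Plus_iff comp_def) (simp add: affine_space_def)

lemma affine_space_subset_zariski_closure_generic_part:
  assumes inf: "infinite (UNIV :: 'k set)" and \<phi>0: "\<phi>0 \<in> affine_space A" "pivot \<phi>0 \<noteq> 0"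
  shows "affine_space A \<subseteq> zariski_closure A ((\<lambda>z. z \<circ> Inl) ` generic_part)"
proof -
  have "{\<phi> \<in> affine_space A. pivot \<phi> \<noteq> 0} \<subseteq> (\<lambda>z. z \<circ> Inl) ` generic_part"
  proof
    fix \<phi> assume "\<phi> \<in> {\<phi> \<in> affine_space A. pivot \<phi> \<noteq> 0}"
    then show "\<phi> \<in> (\<lambda>z. z \<circ> Inl) ` generic_part"
      using zero_extension_in_kernel_variety[of \<phi>]
      by (intro image_eqI[of _ _ "case_sum \<phi> (\<lambda>_. 0)"]) (auto simp: comp_def)
  qed
  then have "zariski_closure A {\<phi> \<in> affine_space A. pivot \<phi> \<noteq> 0}
      \<subseteq> zariski_closure A ((\<lambda>z. z \<circ> Inl) ` generic_part)"
    by (rule zariski_closure_mono)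
  then show ?thesis
    by (simp only: zariski_closure_principal_open[where h = pivot, OF inf polyfuns_pivot \<phi>0])
qed

theorem unique_dominant_component:
  assumes inf: "infinite (UNIV :: 'k set)" and \<phi>0: "\<phi>0 \<in> affine_space A" "pivot \<phi>0 \<noteq> 0"
  shows "\<exists>!C. irreducible_component (Inl ` A \<union> Inr ` B) (kernel_variety A B E m) C
    \<and> zariski_closure A ((\<lambda>z. z \<circ> Inl) ` C) = affine_space A"
proof -
  let ?I = "Inl ` A \<union> Inr ` B" and ?R = "kernel_variety A B E m" and ?h = "\<lambda>z. pivot (z \<circ> Inl)"
  let ?C0 = "zariski_closure ?I generic_part"
  have h: "?h \<in> polyfuns" by (rule polyfuns_comp_Inl[OF polyfuns_pivot])
  have R: "?R \<subseteq> affine_space ?I" by (auto simp: kernel_variety_def)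
  have proj: "(\<lambda>z. z \<circ> Inl) ` X \<subseteq> affine_space A" if "X \<subseteq> ?R" for X
    using that R by (auto simp: affine_space_Plus_iff)
  have C0: "irreducible_component ?I ?R ?C0"
  proof (rule irreducible_component_zariski_closure_principal_open[OF R _ h])
    show "zariski_closed ?I ?R" by (rule zariski_closed_kernel_variety[OF finite_B polyfuns_m])
    show "case_sum \<phi>0 (\<lambda>_. 0) \<in> ?R" "?h (case_sum \<phi>0 (\<lambda>_. 0)) \<noteq> 0"
      using zero_extension_in_kernel_variety[OF \<phi>0(1)] \<phi>0(2) by (simp_all add: comp_def)
    show "poly_irreducible generic_part"
      unfolding generic_part_eq_image by (rule poly_irreducible_polynomial_image[OF inf h polyfuns_solve])
  qed
  then have "?C0 \<subseteq> ?R" by (simp add: irreducible_component_def)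
  then have "zariski_closure A ((\<lambda>z. z \<circ> Inl) ` ?C0) \<subseteq> affine_space A"
    by (rule zariski_closure_subset_affine_space[OF proj])
  moreover have "(\<lambda>z. z \<circ> Inl) ` generic_part \<subseteq> (\<lambda>z. z \<circ> Inl) ` ?C0"
    by (intro image_mono zariski_closure_upper)
  then have "affine_space A \<subseteq> zariski_closure A ((\<lambda>z. z \<circ> Inl) ` ?C0)"
    using affine_space_subset_zariski_closure_generic_part[OF inf \<phi>0] zariski_closure_mono by blast
  ultimately have dense: "zariski_closure A ((\<lambda>z. z \<circ> Inl) ` ?C0) = affine_space A"
    by (rule subset_antisym)
  show ?thesis
  proof (intro ex1I[of _ ?C0] conjI C0 dense, elim conjE)
    fix C assume C: "irreducible_component ?I ?R C"
      and dense_C: "zariski_closure A ((\<lambda>z. z \<circ> Inl) ` C) = affine_space A"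
    have "C \<subseteq> ?R" using C by (simp add: irreducible_component_def)
    then have "\<exists>z\<in>C. ?h z \<noteq> 0"
      using zariski_closure_vanishing[OF proj polyfuns_pivot, of C \<phi>0] dense_C \<phi>0 by blast
    then show "C = ?C0"
      using irreducible_component_eq_zariski_closure_principal_open[OF C C0 R h] by blast
  qed
qed

end

theorem kernel_variety_unique_dominant_component:
  fixes m :: "'e \<Rightarrow> 'b \<Rightarrow> ('a \<Rightarrow> 'k::field) \<Rightarrow> 'k"
  assumes inf: "infinite (UNIV :: 'k set)" and B: "finite B" and m: "\<And>e \<beta>. m e \<beta> \<in> polyfuns"
  shows "\<exists>!C. irreducible_component (Inl ` A \<union> Inr ` B) (kernel_variety A B E m) C
    \<and> zariski_closure A ((\<lambda>z. z \<circ> Inl) ` C) = affine_space A"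
proof -
  have zero: "(\<lambda>_. 0 :: 'k) \<in> affine_space A" by (simp add: affine_space_def)
  obtain r \<rho> \<sigma> \<phi>0 where \<phi>0: "\<phi>0 \<in> affine_space A"
    and \<rho>: "inj_on \<rho> {..<r}" "\<rho> ` {..<r} \<subseteq> E" and \<sigma>: "inj_on \<sigma> {..<r}" "\<sigma> ` {..<r} \<subseteq> B"
    and pivot: "det (minor (\<lambda>e \<beta>. m e \<beta> \<phi>0) \<rho> \<sigma> r) \<noteq> 0"
    and vanish: "\<And>\<phi>. \<phi> \<in> affine_space A \<Longrightarrow> minors_vanish (\<lambda>e \<beta>. m e \<beta> \<phi>) E B (Suc r)"
    using exists_maximal_nonzero_minor[OF B zero, where M = "\<lambda>\<phi> e \<beta>. m e \<beta> \<phi>" and E = E]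
    by blast
  interpret pivot_minor A B E m r \<rho> \<sigma>
    using B m \<rho> \<sigma> vanish by unfold_locales
  show ?thesis by (rule unique_dominant_component[OF inf \<phi>0]) (simp add: pivot_def pivot)
qed

section \<open>Representations of a multiplication\<close>

text \<open>Relation \<open>(p,i,j,r)\<close> of \<open>R(f,\<alpha>)\<close> reads
  \<open>\<Sum>\<^sub>q \<phi>\<^sub>0\<^sub>1(p,i,q) \<phi>\<^sub>1\<^sub>2(q,j,r) - \<Sum>\<^sub>l f(i,j,l) \<phi>\<^sub>0\<^sub>2(p,l,r) = 0\<close>; these are its coefficients
  at the coordinates \<open>Inl (q,j',r')\<close> of \<open>\<phi>\<^sub>1\<^sub>2\<close> and \<open>Inr (p',l,r')\<close> of \<open>\<phi>\<^sub>0\<^sub>2\<close>.\<close>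
definition relation_coeff :: "(nat \<Rightarrow> nat \<Rightarrow> nat \<Rightarrow> 'k::comm_ring_1) \<Rightarrow> nat \<times> nat \<times> nat \<times> nat
    \<Rightarrow> (nat \<times> nat \<times> nat) + (nat \<times> nat \<times> nat) \<Rightarrow> (nat \<times> nat \<times> nat \<Rightarrow> 'k) \<Rightarrow> 'k" where
  "relation_coeff fc e \<beta> \<phi> = (case e of (p,i,j,r) \<Rightarrow> (case \<beta> of
      Inl (q,j',r') \<Rightarrow> if j' = j \<and> r' = r then \<phi> (p,i,q) else 0
    | Inr (p',l,r') \<Rightarrow> if p' = p \<and> r' = r then - fc i j l else 0))"

lemma polyfuns_relation_coeff: "relation_coeff fc e \<beta> \<in> polyfuns"
proof -
  obtain p i j r where e: "e = (p,i,j,r)" by (cases e)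
  show ?thesis
  proof (cases \<beta>)
    case (Inl t)
    obtain q j' r' where "t = (q,j',r')" by (cases t)
    with Inl e show ?thesis unfolding relation_coeff_def
      by (cases "j' = j"; cases "r' = r") (simp_all add: polyfuns.var polyfuns.const)
  next
    case (Inr t)
    obtain p' l r' where "t = (p',l,r')" by (cases t)
    with Inr e show ?thesis unfolding relation_coeff_def by (simp add: polyfuns.const)
  qed
qed

lemma sum_relation_coeff:
  fixes z :: "ridx \<Rightarrow> 'k::comm_ring_1"
  assumes "p < a" "j < v" "r < c"
  shows "(\<Sum>\<beta>\<in>Inl ` ({..<b} \<times> {..<v} \<times> {..<c}) \<union> Inr ` ({..<a} \<times> {..<w} \<times> {..<c}).
            relation_coeff fc (p,i,j,r) \<beta> (z \<circ> Inl) * z (Inr \<beta>))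
       = (\<Sum>q<b. z (Inl (p, i, q)) * z (Inr (Inl (q, j, r))))
         - (\<Sum>l<w. fc i j l * z (Inr (Inr (p, l, r))))"
proof -
  have if_const: "(\<Sum>x\<in>X. if P then g x else 0) = (if P then sum g X else 0)" for X P and g :: "nat \<Rightarrow> 'k"
    by simp
  let ?f = "\<lambda>\<beta>. relation_coeff fc (p,i,j,r) \<beta> (z \<circ> Inl) * z (Inr \<beta>)"
  have "sum ?f (Inl ` ({..<b} \<times> {..<v} \<times> {..<c}))
      = (\<Sum>(q,j',r')\<in>{..<b} \<times> {..<v} \<times> {..<c}.
          if j' = j \<and> r' = r then z (Inl (p, i, q)) * z (Inr (Inl (q, j, r))) else 0)"
    by (auto simp: sum.reindex relation_coeff_def intro!: sum.cong)
  also have "\<dots> = (\<Sum>q<b. z (Inl (p, i, q)) * z (Inr (Inl (q, j, r))))"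
    using assms by (simp add: sum.cartesian_product[symmetric] if_if_eq_conj[symmetric] if_const)
  finally have Inl_sum: "sum ?f (Inl ` ({..<b} \<times> {..<v} \<times> {..<c}))
      = (\<Sum>q<b. z (Inl (p, i, q)) * z (Inr (Inl (q, j, r))))" .
  have "sum ?f (Inr ` ({..<a} \<times> {..<w} \<times> {..<c}))
      = (\<Sum>(p',l,r')\<in>{..<a} \<times> {..<w} \<times> {..<c}.
          if p' = p \<and> r' = r then - (fc i j l * z (Inr (Inr (p, l, r)))) else 0)"
    by (auto simp: sum.reindex relation_coeff_def intro!: sum.cong)
  also have "\<dots> = - (\<Sum>l<w. fc i j l * z (Inr (Inr (p, l, r))))"
    using assms by (simp add: sum.cartesian_product[symmetric] if_if_eq_conj[symmetric] if_const sum_negf)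
  finally have Inr_sum: "sum ?f (Inr ` ({..<a} \<times> {..<w} \<times> {..<c}))
      = - (\<Sum>l<w. fc i j l * z (Inr (Inr (p, l, r))))" .
  show ?thesis using Inl_sum Inr_sum by (subst sum.union_disjoint) auto
qed

lemma rep_index_eq:
  "rep_index u v w a b c
    = Inl ` left_index u a b \<union> Inr ` (Inl ` ({..<b} \<times> {..<v} \<times> {..<c}) \<union> Inr ` ({..<a} \<times> {..<w} \<times> {..<c}))"
  unfolding rep_index_def left_index_def by (simp add: image_Un Un_assoc)

lemma rep_variety_eq_kernel_variety:
  "rep_variety u v w fc a b c = kernel_variety (left_index u a b)
     (Inl ` ({..<b} \<times> {..<v} \<times> {..<c}) \<union> Inr ` ({..<a} \<times> {..<w} \<times> {..<c}))
     ({..<a} \<times> {..<u} \<times> {..<v} \<times> {..<c}) (relation_coeff fc)"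
  unfolding rep_variety_def kernel_variety_def rep_index_eq by (auto simp: sum_relation_coeff)

theorem lemma3p1:
  fixes fc :: "nat \<Rightarrow> nat \<Rightarrow> nat \<Rightarrow> 'k::field"
    and u v w a b c :: nat
  assumes "infinite (UNIV :: 'k set)"
  shows "\<exists>!C. left_general u v w fc a b c C"
proof -
  have restrict_left: "restrict_left = (\<lambda>z :: ridx \<Rightarrow> 'k. z \<circ> Inl)"
    by (simp add: restrict_left_def fun_eq_iff)
  show ?thesis
    unfolding left_general_def rep_index_eq rep_variety_eq_kernel_variety restrict_left
    by (intro kernel_variety_unique_dominant_component assms polyfuns_relation_coeff) simp
qed

end
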